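(* Let $X$ be a topological quandle. (1) If $X$ has the discrete topology, then $H_n(X)=C_n(X)$ for all $n$ (i.e. all boundary maps vanish, so $H_n(X)\cong C_n(X)$). (2) If the quandle structure of $X$ is trivial (i.e. $x\triangleright y=x$ for all $x,y$), then $H_n(X)=C_n(X)$ for all $n$.
   Context: A quandle is a set with a binary operation $\triangleright$ such that $x\triangleright x=x$, each $\beta_y(x)=x\triangleright y$ is bijective, and $(x\triangleright y)\triangleright z=(x\triangleright z)\triangleright(y\triangleright z)$. A topological quandle is a topological space with a continuous quandle operation such that every $\beta_y$ is a homeomorphism. Let $\Delta^n$ have vertices $e_0,\dots,e_n$ ($\Delta^{n-1}$ has vertices $\bar e_0,\dots,\bar e_{n-1}$). For a singular $n$-simplex $\sigma:\Delta^n\to X$ write $\sigma=\sigma_{[x_1,\dots,x_{n+1}]}$ with $x_i=\sigma(e_{i-1})$; singular simplices are combined pointwise by $(\sigma\triangleright\tau)(t)=\sigma(t)\triangleright\tau(t)$. $C_n(X)$ is the free abelian group on singular $n$-simplices. For $2\le i\le n+1$, $d_i\sigma$ is $\sigma$ restricted to the face omitting $e_{i-1}$ (via $\bar e_j\mapsto e_j$ for $j\le i-2$, $\bar e_j\mapsto e_{j+1}$ for $j\ge i-1$), and $s_i\sigma=\sigma\circ\iota_i$ with $\iota_i(\sum t_j\bar e_j)=(\sum_{k=0}^{i-2}t_k)e_{i-1}+\sum_{j=i-1}^{n-1}t_je_{j+1}$. The boundary is $\partial_n\sigma=\sum_{i=2}^{n+1}(-1)^i(d_i\sigma-d_i\sigma\triangleright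 s_i\sigma)$, extended linearly ($\partial_0=0$); $H_n(X)$ is the $n$-th homology of $(C_*(X),\partial)$. *)

theory Defs
  imports "HOL-Homology.Homology"
begin

definition quandle_on :: "'a set \<Rightarrow> ('a \<Rightarrow> 'a \<Rightarrow> 'a) \<Rightarrow> bool" where
  "quandle_on S q \<longleftrightarrow>
     (\<forall>x\<in>S. \<forall>y\<in>S. q x y \<in> S) \<and>
     (\<forall>x\<in>S. q x x = x) \<and>
     (\<forall>y\<in>S. bij_betw (\<lambda>x. q x y) S S) \<and>
     (\<forall>x\<in>S. \<forall>y\<in>S. \<forall>z\<in>S. q (q x y) z = q (q x z) (q y z))"

definition topological_quandle :: "'a topology \<Rightarrow> ('a \<Rightarrow> 'a \<Rightarrow> 'a) \<Rightarrow> bool" where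
  "topological_quandle X q \<longleftrightarrow>
     quandle_on (topspace X) q \<and>
     continuous_map (prod_topology X X) X (\<lambda>(x, y). q x y) \<and>
     (\<forall>y\<in>topspace X. homeomorphic_map X X (\<lambda>x. q x y))"

definition simplex_op :: "('a \<Rightarrow> 'a \<Rightarrow> 'a) \<Rightarrow> nat \<Rightarrow> ((nat \<Rightarrow> real) \<Rightarrow> 'a)
    \<Rightarrow> ((nat \<Rightarrow> real) \<Rightarrow> 'a) \<Rightarrow> (nat \<Rightarrow> real) \<Rightarrow> 'a" where
  "simplex_op q p \<sigma> \<tau> = restrict (\<lambda>t. q (\<sigma> t) (\<tau> t)) (standard_simplex p)"

text \<open>The map iota_i with k = i - 1: sends the first k vertices of the (n-1)-simplex to e_k,
  and vertex j (j \<ge> k) to e_(j+1).\<close>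
definition degen_map :: "nat \<Rightarrow> (nat \<Rightarrow> real) \<Rightarrow> nat \<Rightarrow> real" where
  "degen_map k t = (\<lambda>m. if m = k then sum t {..<k} else if k < m then t (m - 1) else 0)"

text \<open>s_i sigma for an n-simplex sigma, with k = i - 1.\<close>
definition singular_degen :: "nat \<Rightarrow> nat \<Rightarrow> ((nat \<Rightarrow> real) \<Rightarrow> 'a) \<Rightarrow> (nat \<Rightarrow> real) \<Rightarrow> 'a" where
  "singular_degen n k \<sigma> = restrict (\<sigma> \<circ> degen_map k) (standard_simplex (n - 1))"

text \<open>Quandle boundary: sum over i = 2..n+1 (k = i - 1 = 1..n) of
  (-1)^i (d_i sigma - d_i sigma \<triangleright> s_i sigma); d_i sigma = singular_face n (i-1) sigma.\<close>
definition quandle_boundary :: "('a \<Rightarrow> 'a \<Rightarrow> 'a) \<Rightarrow> nat \<Rightarrow> 'a chain \<Rightarrow> 'a chain" where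
  "quandle_boundary q n c =
     (if n = 0 then 0 else
      frag_extend (\<lambda>\<sigma>. \<Sum>k\<in>{1..n}. frag_cmul ((-1) ^ (k + 1))
          (frag_of (singular_face n k \<sigma>)
           - frag_of (simplex_op q (n - 1) (singular_face n k \<sigma>) (singular_degen n k \<sigma>)))) c)"

text \<open>C_n(X) is chain_group n X (free abelian group on singular n-simplices).
  Cycles, boundaries and homology H_n(X) = Z_n / B_n.\<close>
definition quandle_cycles :: "'a topology \<Rightarrow> ('a \<Rightarrow> 'a \<Rightarrow> 'a) \<Rightarrow> nat \<Rightarrow> 'a chain set" where
  "quandle_cycles X q n = {c \<in> carrier (chain_group n X). quandle_boundary q n c = 0}"

definition quandle_boundaries :: "'a topology \<Rightarrow> ('a \<Rightarrow> 'a \<Rightarrow> 'a) \<Rightarrow> nat \<Rightarrow> 'a chain set" where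
  "quandle_boundaries X q n = quandle_boundary q (Suc n) ` carrier (chain_group (Suc n) X)"

definition quandle_homology :: "'a topology \<Rightarrow> ('a \<Rightarrow> 'a \<Rightarrow> 'a) \<Rightarrow> nat \<Rightarrow> 'a chain set monoid" where
  "quandle_homology X q n =
     subgroup_generated (chain_group n X) (quandle_cycles X q n) Mod quandle_boundaries X q n"

end

theory Submission
  imports Defs
begin

text \<open>Each term d_i \<sigma> - d_i \<sigma> \<triangleright> s_i \<sigma> of the quandle boundary compares \<sigma> at two points
  of the same standard simplex, so it vanishes as soon as q (\<sigma> u) (\<sigma> v) = \<sigma> u along every
  singular simplex \<sigma>. For a trivial quandle this holds outright; for a discrete space every
  singular simplex is constant, since the standard simplex is connected, and idempotency
  q x x = x gives it.\<close>

lemma sum_degen_map: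
  assumes "k \<le> Suc n"
  shows "sum (degen_map k t) {..Suc n} = sum t {..n}"
proof -
  have split: "{..m} = {..<k} \<union> {k..m}" if "k \<le> Suc m" for m :: nat
    using that by auto
  have "sum (degen_map k t) {..Suc n} = sum (degen_map k t) {k..Suc n}"
    unfolding split[OF le_SucI[OF assms]] by (subst sum.union_disjoint) (auto simp: degen_map_def)
  also have "\<dots> = sum t {..<k} + sum (degen_map k t) {Suc k..Suc n}"
    unfolding sum.atLeast_Suc_atMost[OF assms] by (simp add: degen_map_def)
  also have "sum (degen_map k t) {Suc k..Suc n} = sum t {k..n}"
    unfolding sum.shift_bounds_cl_Suc_ivl by (rule sum.cong) (auto simp: degen_map_def)
  also have "sum t {..<k} + sum t {k..n} = sum t {..n}"
    unfolding split[OF assms] by (rule sum.union_disjoint[symmetric]) auto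
  finally show ?thesis .
qed

lemma degen_map_in_standard_simplex:
  assumes "k \<le> Suc n" "t \<in> standard_simplex n"
  shows "degen_map k t \<in> standard_simplex (Suc n)"
proof -
  have nonneg: "0 \<le> degen_map k t i" for i
    using assms(2) by (auto simp: degen_map_def standard_simplex_def intro: sum_nonneg)
  have sum1: "sum (degen_map k t) {..Suc n} = 1"
    using assms by (simp add: sum_degen_map standard_simplex_def del: sum.atMost_Suc)
  have beyond: "degen_map k t i = 0" if "Suc n < i" for i
    using assms that by (auto simp: degen_map_def standard_simplex_def)
  have "degen_map k t i \<le> 1" for i
  proof (cases "i \<le> Suc n")
    case True
    then show ?thesis
      using member_le_sum[of i "{..Suc n}" "degen_map k t"] nonneg sum1 by simp
  qed (simp add: beyond)
  then show ?thesis
    using nonneg sum1 beyond by (simp add: standard_simplex_def del: sum.atMost_Suc)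
qed

definition simplexwise_trivial :: "'a topology \<Rightarrow> ('a \<Rightarrow> 'a \<Rightarrow> 'a) \<Rightarrow> bool" where
  "simplexwise_trivial X q \<longleftrightarrow>
     (\<forall>n \<sigma>. singular_simplex n X \<sigma> \<longrightarrow>
        (\<forall>u\<in>standard_simplex n. \<forall>v\<in>standard_simplex n. q (\<sigma> u) (\<sigma> v) = \<sigma> u))"

lemma singular_simplex_in_topspace:
  "singular_simplex n X \<sigma> \<Longrightarrow> u \<in> standard_simplex n \<Longrightarrow> \<sigma> u \<in> topspace X"
  by (auto simp: singular_simplex_def continuous_map_def)

lemma singular_simplex_discrete_topology_const:
  assumes "singular_simplex n (discrete_topology S) \<sigma>"
    and "u \<in> standard_simplex n" "v \<in> standard_simplex n"
  shows "\<sigma> u = \<sigma> v"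
proof -
  have "connectedin (discrete_topology S) (\<sigma> ` standard_simplex n)"
    using assms(1) connectedin_standard_simplex unfolding singular_simplex_def
    by (metis connectedin_continuous_map_image connectedin_subtopology order_refl)
  then obtain a where "\<sigma> ` standard_simplex n \<subseteq> {a}"
    by (auto simp: connectedin_discrete_topology)
  then show ?thesis
    using assms(2,3) by auto
qed

lemma simplexwise_trivial_discrete_topology:
  assumes "\<forall>x\<in>S. q x x = x"
  shows "simplexwise_trivial (discrete_topology S) q"
  unfolding simplexwise_trivial_def
proof (intro allI impI ballI)
  fix n \<sigma> u v
  assume \<sigma>: "singular_simplex n (discrete_topology S) \<sigma>"
    and uv: "u \<in> standard_simplex n" "v \<in> standard_simplex n"
  have "\<sigma> v = \<sigma> u"
    using singular_simplex_discrete_topology_const[OF \<sigma>] uv by blast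
  moreover have "\<sigma> u \<in> S"
    using singular_simplex_in_topspace[OF \<sigma> uv(1)] by simp
  ultimately show "q (\<sigma> u) (\<sigma> v) = \<sigma> u"
    using assms by simp
qed

lemma simplexwise_trivial_trivial_quandle:
  assumes "\<forall>x\<in>topspace X. \<forall>y\<in>topspace X. q x y = x"
  shows "simplexwise_trivial X q"
  unfolding simplexwise_trivial_def
  using assms singular_simplex_in_topspace[of _ X] by blast

lemma simplex_op_face_degen:
  assumes "simplexwise_trivial X q" "singular_simplex n X \<sigma>" "k \<in> {1..n}"
  shows "simplex_op q (n - 1) (singular_face n k \<sigma>) (singular_degen n k \<sigma>) = singular_face n k \<sigma>"
proof -
  obtain m where n: "n = Suc m"
    using assms(3) by (cases n) auto
  have "q (\<sigma> (simplical_face k t)) (\<sigma> (degen_map k t)) = \<sigma> (simplical_face k t)"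
    if "t \<in> standard_simplex m" for t
    using assms that simplical_face_in_standard_simplex[of n k t] degen_map_in_standard_simplex[of k m t]
    by (auto simp: simplexwise_trivial_def n)
  then show ?thesis
    by (auto simp: simplex_op_def singular_face_def singular_degen_def n intro!: restrict_ext)
qed

lemma quandle_boundary_eq_0:
  assumes "simplexwise_trivial X q" "c \<in> carrier (chain_group n X)"
  shows "quandle_boundary q n c = 0"
proof -
  have "singular_simplex n X \<sigma>" if "\<sigma> \<in> Poly_Mapping.keys c" for \<sigma>
    using assms(2) that by (auto simp: singular_chain_def)
  then show ?thesis
    using simplex_op_face_degen[OF assms(1)]
    by (auto simp: quandle_boundary_def intro!: frag_extend_eq_0 sum.neutral)
qed

lemma quandle_homology_iso_chain_group:
  assumes "simplexwise_trivial X q"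
  shows "quandle_homology X q n \<cong> chain_group n X"
proof -
  interpret C: group "chain_group n X" by simp
  have cycles: "quandle_cycles X q n = carrier (chain_group n X)"
    using quandle_boundary_eq_0[OF assms] by (auto simp: quandle_cycles_def)
  have "0 \<in> carrier (chain_group (Suc n) X)"
    by simp
  then have boundaries: "quandle_boundaries X q n = {\<one>\<^bsub>chain_group n X\<^esub>}"
    using quandle_boundary_eq_0[OF assms]
    unfolding quandle_boundaries_def by force
  have "quandle_homology X q n = chain_group n X Mod {\<one>\<^bsub>chain_group n X\<^esub>}"
    unfolding quandle_homology_def cycles boundaries C.subgroup_generated_group_carrier ..
  then show ?thesis
    using C.trivial_factor_iso by (auto simp: is_iso_def)
qed

theorem mainTheorem4:
  fixes X :: "'a topology" and q :: "'a \<Rightarrow> 'a \<Rightarrow> 'a"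
  assumes "topological_quandle X q"
  shows "(X = discrete_topology (topspace X) \<longrightarrow>
           (\<forall>n. \<forall>c \<in> carrier (chain_group n X). quandle_boundary q n c = 0) \<and>
           (\<forall>n. quandle_homology X q n \<cong> chain_group n X)) \<and>
         ((\<forall>x\<in>topspace X. \<forall>y\<in>topspace X. q x y = x) \<longrightarrow>
           (\<forall>n. \<forall>c \<in> carrier (chain_group n X). quandle_boundary q n c = 0) \<and>
           (\<forall>n. quandle_homology X q n \<cong> chain_group n X))"
proof -
  have idempotent: "\<forall>x\<in>topspace X. q x x = x"
    using assms by (simp add: topological_quandle_def quandle_on_def)
  have "(\<forall>n. \<forall>c \<in> carrier (chain_group n X). quandle_boundary q n c = 0) \<and>
        (\<forall>n. quandle_homology X q n \<cong> chain_group n X)" if "simplexwise_trivial X q"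
    using quandle_boundary_eq_0[OF that] quandle_homology_iso_chain_group[OF that] by blast
  moreover have "simplexwise_trivial X q" if "X = discrete_topology (topspace X)"
    using simplexwise_trivial_discrete_topology[of "topspace X" q, OF idempotent] that by metis
  moreover have "simplexwise_trivial X q" if "\<forall>x\<in>topspace X. \<forall>y\<in>topspace X. q x y = x"
    using that by (rule simplexwise_trivial_trivial_quandle)
  ultimately show ?thesis
    by blast
qed

end
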